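(* Let $u,\phi_1,\dots,\phi_N$ solve the $n$-th KdV equation with self-consistent sources of degree $N$, let $\eta=-\frac12\alpha$, let $f_1,\dots,f_m$ satisfy the Lax pair $f_{j,xx}+(\lambda_{N+j}+u)f_j=0$, $f_{j,t}=Q^{(n,N)}f_j$ with spectral parameters $\lambda_{N+1},\dots,\lambda_{N+m}$ respectively, and let $\psi$ satisfy the Lax pair with spectral parameter $\lambda$. Define iterates by $f_j[0]=f_j$, $\psi[0]=\psi$ and, for $l\ge1$ and $g\in\{f_j,\psi\}$, $$g[l]=g[l-1]-\frac{f_l[l-1]}{1+\partial^{-1}(f_l[l-1]^2)}\,\partial^{-1}\big(f_l[l-1]\,g[l-1]\big).$$ Then for all integers $l,k$ with $1\le l\le m-1$ and $1\le k\le m-l$, $$W_1(f_{l+1}[l],\dots,f_{l+k}[l])=\frac{W_1(f_l[l-1],f_{l+1}[l-1],\dots,f_{l+k}[l-1])}{1+\partial^{-1}(f_l[l-1]^2)},$$ $$W_2(f_{l+1}[l],\dots,f_{l+k}[l],\psi[l])=\frac{W_2(f_l[l-1],f_{l+1}[l-1],\dots,f_{l+k}[l-1],\psi[l-1])}{1+\partial^{-1}(f_l[l-1]^2)}.$$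
   Context: Let $\partial=\partial/\partial x$ and $\partial^{-1}=\int_{-\infty}^x\cdot\,dx$; all functions of $(x,t)$ are smooth and decay as $x\to-\infty$ sufficiently fast that all integrals $\partial^{-1}(\cdot)$ appearing converge. For a potential $u(x,t)$ let $L=-\frac14\partial^2-u+\frac12\partial^{-1}u_x$, $b_0=0$, $b_1=1$, $b_{k+1}=Lb_k$ ($k\ge1$), $a_k=-\frac12 b_{k,x}$; write $b_k[u]$. Fix $n\ge0$, $t=t_n$, $A^{(n)}(u,\lambda)=\sum_{i=0}^{n+1}(a_i+b_i\partial)\lambda^{n+1-i}$. The $n$-th KdV equation with self-consistent sources of degree $N$ (constant $\alpha$, distinct constants $\lambda_j$) is $u_t=\partial\big[-2b_{n+2}[u]-2\alpha\sum_{j=1}^N\phi_j^2\big]$, $\phi_{j,xx}+(\lambda_j+u)\phi_j=0$. For a constant $\eta$ and spectral parameter $\lambda$, $Q^{(n,N)}\psi=A^{(n)}(u,\lambda)\psi+\eta\psi+\alpha\sum_{j=1}^N\phi_j\partial^{-1}(\phi_j\psi)$; the Lax pair with spectral parameter $\lambda$ is $\psi_{xx}+(\lambda+u)\psi=0$, $\psi_t=Q^{(n,N)}\psi$. The constants $\lambda_1,\dots,\lambda_{N+m}$ are distinct. For functions $g_1,\dots,g_k$: $W_1(g_1,\dots,g_k)=\det F$ with $F_{ij}=\delta_{ij}+\partial^{-1}(g_ig_j)$, $1\le i,j\le k$; and $W_2(g_1,\dots,g_k)=\det G$ with $G_{ij}=\delta_{ij}+\partial^{-1}(g_ig_j)$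 for $1\le i\le k-1$, $1\le j\le k$, and $G_{kj}=g_j$ for $1\le j\le k$. *)

theory Defs
  imports "HOL-Analysis.Analysis" "Jordan_Normal_Form.Determinant"
begin

type_synonym fn2 = "real \<Rightarrow> real \<Rightarrow> real"  (* functions of (x,t) *)

definition Dx :: "fn2 \<Rightarrow> fn2" where
  "Dx g = (\<lambda>x t. deriv (\<lambda>y. g y t) x)"

definition Dt :: "fn2 \<Rightarrow> fn2" where
  "Dt g = (\<lambda>x t. deriv (\<lambda>s. g x s) t)"

definition smooth2 :: "fn2 \<Rightarrow> bool" where
  "smooth2 g = (\<forall>ds :: bool list.
     (\<lambda>(x,t). (foldr (\<lambda>d h. if d then Dx h else Dt h) ds g) x t) differentiable_on UNIV)"

definition pinv :: "fn2 \<Rightarrow> fn2" where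
  "pinv g = (\<lambda>x t. LBINT s:{..x}. g s t)"

definition pinv_ok :: "fn2 \<Rightarrow> bool" where
  "pinv_ok h = (\<forall>x t. set_integrable lborel {..x} (\<lambda>s. h s t))"

definition decays :: "fn2 \<Rightarrow> bool" where
  "decays g = (\<forall>t. ((\<lambda>x. g x t) \<longlongrightarrow> 0) at_bot)"

definition mulf :: "fn2 \<Rightarrow> fn2 \<Rightarrow> fn2" where
  "mulf g h = (\<lambda>x t. g x t * h x t)"

definition Lop :: "fn2 \<Rightarrow> fn2 \<Rightarrow> fn2" where
  "Lop u g = (\<lambda>x t. - (1/4) * Dx (Dx g) x t - u x t * g x t
                     + (1/2) * pinv (mulf (Dx u) g) x t)"

fun bk :: "fn2 \<Rightarrow> nat \<Rightarrow> fn2" where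
  "bk u 0 = (\<lambda>x t. 0)"
| "bk u (Suc 0) = (\<lambda>x t. 1)"
| "bk u (Suc (Suc k)) = Lop u (bk u (Suc k))"

definition ak :: "fn2 \<Rightarrow> nat \<Rightarrow> fn2" where
  "ak u k = (\<lambda>x t. - (1/2) * Dx (bk u k) x t)"

definition Aop :: "nat \<Rightarrow> fn2 \<Rightarrow> real \<Rightarrow> fn2 \<Rightarrow> fn2" where
  "Aop n u lam psi = (\<lambda>x t. \<Sum>i\<le>n+1.
      (ak u i x t * psi x t + bk u i x t * Dx psi x t) * lam ^ (n + 1 - i))"

definition Qop :: "nat \<Rightarrow> nat \<Rightarrow> fn2 \<Rightarrow> (nat \<Rightarrow> fn2) \<Rightarrow> real \<Rightarrow> real \<Rightarrow> real \<Rightarrow> fn2 \<Rightarrow> fn2" where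
  "Qop n N u phi alpha eta lam psi = (\<lambda>x t.
      Aop n u lam psi x t + eta * psi x t
      + alpha * (\<Sum>j=1..N. phi j x t * pinv (mulf (phi j) psi) x t))"

definition kdv_sources :: "nat \<Rightarrow> nat \<Rightarrow> real \<Rightarrow> (nat \<Rightarrow> real) \<Rightarrow> fn2 \<Rightarrow> (nat \<Rightarrow> fn2) \<Rightarrow> bool" where
  "kdv_sources n N alpha lams u phi =
     ((\<forall>x t. Dt u x t = Dx (\<lambda>x t. - 2 * bk u (n+2) x t - 2 * alpha * (\<Sum>j=1..N. (phi j x t)^2)) x t)
      \<and> (\<forall>j\<in>{1..N}. \<forall>x t. Dx (Dx (phi j)) x t + (lams j + u x t) * phi j x t = 0))"

definition lax_pair :: "nat \<Rightarrow> nat \<Rightarrow> fn2 \<Rightarrow> (nat \<Rightarrow> fn2) \<Rightarrow> real \<Rightarrow> real \<Rightarrow> real \<Rightarrow> fn2 \<Rightarrow> bool" where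
  "lax_pair n N u phi alpha eta lam psi =
     ((\<forall>x t. Dx (Dx psi) x t + (lam + u x t) * psi x t = 0)
      \<and> (\<forall>x t. Dt psi x t = Qop n N u phi alpha eta lam psi x t))"

definition dstep :: "fn2 \<Rightarrow> fn2 \<Rightarrow> fn2" where
  "dstep h g = (\<lambda>x t. g x t - h x t / (1 + pinv (mulf h h) x t) * pinv (mulf h g) x t)"

text \<open>Iterates: iter f l g = g[l], with f_l[l-1] = iter f (l-1) (f l).\<close>
fun iter :: "(nat \<Rightarrow> fn2) \<Rightarrow> nat \<Rightarrow> fn2 \<Rightarrow> fn2" where
  "iter f 0 g = g"
| "iter f (Suc l) g = dstep (iter f l (f (Suc l))) (iter f l g)"

definition W1 :: "fn2 list \<Rightarrow> fn2" where
  "W1 gs = (\<lambda>x t. det (mat (length gs) (length gs)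
      (\<lambda>(i,j). (if i = j then 1 else 0) + pinv (mulf (gs!i) (gs!j)) x t)))"

definition W2 :: "fn2 list \<Rightarrow> fn2" where
  "W2 gs = (\<lambda>x t. det (mat (length gs) (length gs)
      (\<lambda>(i,j). if i + 1 < length gs
               then (if i = j then 1 else 0) + pinv (mulf (gs!i) (gs!j)) x t
               else (gs!j) x t)))"

end

theory Submission
  imports Defs
begin

text \<open>A Darboux step with \<open>h = f\<^sub>l[l-1]\<close> and \<open>D = 1 + \<partial>\<^sup>-\<^sup>1(h\<^sup>2)\<close> acts on the
  integrals of products by a rank one update,
  \<open>\<partial>\<^sup>-\<^sup>1(g\<^sub>1[l] g\<^sub>2[l]) = \<partial>\<^sup>-\<^sup>1(g\<^sub>1 g\<^sub>2) - \<partial>\<^sup>-\<^sup>1(h g\<^sub>1) \<partial>\<^sup>-\<^sup>1(h g\<^sub>2) / D\<close>,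
  because both sides have the same \<open>x\<close>-derivative and vanish as \<open>x \<rightarrow> -\<infinity>\<close>.
  Hence the matrices of \<open>W\<^sub>1\<close> and \<open>W\<^sub>2\<close> at level \<open>l\<close> are the Schur complements of the pivot
  \<open>D\<close> in the matrices at level \<open>l - 1\<close> bordered by \<open>h\<close>, and \<open>det M = M\<^sub>0\<^sub>0 det (M/M\<^sub>0\<^sub>0)\<close>.\<close>

lemma tendsto_set_integral_atMost_at_bot:
  fixes F :: "real \<Rightarrow> real"
  assumes int: "set_integrable lborel {..b} F"
  shows "((\<lambda>x. LBINT s:{..x}. F s) \<longlongrightarrow> 0) at_bot"
proof (rule tendsto_at_botI_sequentially)
  fix X :: "nat \<Rightarrow> real" assume X: "filterlim X at_bot sequentially"
  have "(\<lambda>n. LINT x|lborel. indicat_real {..min (X n) b} x *\<^sub>R F x) \<longlonglongrightarrow> (LINT (x::real)|lborel. 0)"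
  proof (rule integral_dominated_convergence[where w="\<lambda>x. indicat_real {..b} x *\<^sub>R norm (F x)"])
    show "integrable lborel (\<lambda>x. indicat_real {..b} x *\<^sub>R norm (F x))"
      using integrable_norm[OF int[unfolded set_integrable_def]] by (simp add: abs_mult)
    show "AE x in lborel. (\<lambda>n. indicat_real {..min (X n) b} x *\<^sub>R F x) \<longlonglongrightarrow> 0"
    proof
      fix x
      have "eventually (\<lambda>n. X n < x) sequentially"
        by (rule filterlim_at_bot_dense[THEN iffD1, OF X, rule_format])
      then show "(\<lambda>n. indicat_real {..min (X n) b} x *\<^sub>R F x) \<longlonglongrightarrow> 0"
        by (intro tendsto_eventually, elim eventually_mono) (auto simp: indicator_def)
    qed
    fix n
    show "AE x in lborel. norm (indicat_real {..min (X n) b} x *\<^sub>R F x)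
                           \<le> indicat_real {..b} x *\<^sub>R norm (F x)"
      by (rule AE_I2) (auto simp: indicator_def)
    have "set_integrable lborel {..min (X n) b} F"
      by (rule set_integrable_subset[OF int]) auto
    then show "(\<lambda>x. indicat_real {..min (X n) b} x *\<^sub>R F x) \<in> borel_measurable lborel"
      by (simp add: set_integrable_def)
  qed simp
  then have "(\<lambda>n. LBINT s:{..min (X n) b}. F s) \<longlonglongrightarrow> 0"
    by (simp add: set_lebesgue_integral_def)
  moreover have "eventually (\<lambda>n. (LBINT s:{..min (X n) b}. F s) = (LBINT s:{..X n}. F s)) sequentially"
    using filterlim_at_bot[THEN iffD1, OF X, rule_format, of b] by (auto elim!: eventually_mono simp: min_def)
  ultimately show "(\<lambda>n. LBINT s:{..X n}. F s) \<longlonglongrightarrow> 0"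
    by (rule Lim_transform_eventually)
qed

lemma set_integral_atMost_has_real_derivative:
  fixes F :: "real \<Rightarrow> real"
  assumes cont: "continuous_on UNIV F" and int: "\<And>x. set_integrable lborel {..x} F"
  shows "((\<lambda>x. LBINT s:{..x}. F s) has_real_derivative F x0) (at x0)"
proof -
  define a where "a = x0 - 1"
  have atMost_split: "(LBINT s:{..y}. F s) = (LBINT s:{..a}. F s) + integral {a..y} F" if "a \<le> y" for y
  proof -
    have int_ay: "set_integrable lborel {a..y} F"
      by (rule set_integrable_subset[OF int[of y]]) auto
    have "AE s in lborel. \<not> (s \<in> {..a} \<and> s \<in> {a..y})"
      using AE_lborel_singleton[of a] by (auto elim!: eventually_mono)
    then have "(LBINT s:{..a} \<union> {a..y}. F s) = (LBINT s:{..a}. F s) + (LBINT s:{a..y}. F s)"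
      by (rule set_integral_Un_AE[OF _ _ _ int[of a] int_ay]) auto
    moreover have "{..a} \<union> {a..y} = {..y}" using that by auto
    ultimately show ?thesis
      using set_borel_integral_eq_integral(2)[OF int_ay] by simp
  qed
  have "((\<lambda>y. integral {a..y} F) has_real_derivative F x0) (at x0 within {a..x0 + 1})"
    by (rule integral_has_real_derivative) (auto intro: continuous_on_subset[OF cont] simp: a_def)
  then have "((\<lambda>y. integral {a..y} F) has_real_derivative F x0) (at x0)"
    by (simp add: at_within_Icc_at a_def)
  then have "((\<lambda>y. (LBINT s:{..a}. F s) + integral {a..y} F) has_real_derivative 0 + F x0) (at x0)"
    by (rule DERIV_add[OF DERIV_const])
  then show ?thesis
    unfolding add_0_left
  proof (rule has_field_derivative_transform_within_open[where S="{a<..}"])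
    show "(LBINT s:{..a}. F s) + integral {a..y} F = (LBINT s:{..y}. F s)" if "y \<in> {a<..}" for y
      using atMost_split[of y] that by simp
  qed (simp_all add: a_def)
qed

lemma DERIV_zero_tendsto_at_bot_imp_zero:
  fixes \<Phi> :: "real \<Rightarrow> real"
  assumes "\<And>y. (\<Phi> has_real_derivative 0) (at y)" and "(\<Phi> \<longlongrightarrow> 0) at_bot"
  shows "\<Phi> x = 0"
proof -
  have "\<Phi> y = \<Phi> x" for y
    using assms(1) by (blast intro: DERIV_isconst_all)
  then have "(\<Phi> \<longlongrightarrow> \<Phi> x) at_bot"
    by (intro tendsto_eventually always_eventually allI)
  with assms(2) show ?thesis
    using tendsto_unique[OF trivial_limit_at_bot_linorder] by blast
qed

lemma set_integral_square_nonneg: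
  fixes F :: "real \<Rightarrow> real"
  shows "0 \<le> (LBINT s:S. F s * F s)"
  unfolding set_lebesgue_integral_def
  by (rule integral_nonneg_AE) (auto split: split_indicator)

definition continuous_in_x :: "fn2 \<Rightarrow> bool" where
  "continuous_in_x g \<longleftrightarrow> (\<forall>t. continuous_on UNIV (\<lambda>x. g x t))"

lemma smooth2_imp_continuous_in_x:
  assumes "smooth2 g"
  shows "continuous_in_x g"
  unfolding continuous_in_x_def
proof
  fix t
  have "(\<lambda>(x,t). g x t) differentiable_on UNIV"
    using assms[unfolded smooth2_def, rule_format, of "[]"] by simp
  then have "continuous_on UNIV (\<lambda>(x,t). g x t)"
    by (rule differentiable_imp_continuous_on)
  then have "continuous_on UNIV ((\<lambda>(x,t). g x t) \<circ> (\<lambda>x. (x,t)))"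
    by (intro continuous_on_compose continuous_intros) (auto intro: continuous_on_subset)
  then show "continuous_on UNIV (\<lambda>x. g x t)"
    by (simp add: o_def)
qed

lemma mulf_commute: "mulf g h = mulf h g"
  by (auto simp: mulf_def fun_eq_iff)

lemma pinv_mulf_has_real_derivative:
  assumes "continuous_in_x a" "continuous_in_x b" "pinv_ok (mulf a b)"
  shows "((\<lambda>x. pinv (mulf a b) x t) has_real_derivative a x t * b x t) (at x)"
proof -
  have "continuous_on UNIV (\<lambda>s. a s t * b s t)"
    using assms(1,2) unfolding continuous_in_x_def by (auto intro!: continuous_intros)
  moreover have "\<And>y. set_integrable lborel {..y} (\<lambda>s. a s t * b s t)"
    using assms(3) unfolding pinv_ok_def mulf_def by auto
  ultimately show ?thesis
    unfolding pinv_def mulf_def by (rule set_integral_atMost_has_real_derivative)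
qed

lemma tendsto_pinv_at_bot:
  assumes "pinv_ok g"
  shows "((\<lambda>x. pinv g x t) \<longlongrightarrow> 0) at_bot"
  using assms unfolding pinv_ok_def pinv_def by (blast intro: tendsto_set_integral_atMost_at_bot)

lemma pinv_square_nonneg: "0 \<le> pinv (mulf h h) x t"
  unfolding pinv_def mulf_def by (rule set_integral_square_nonneg)

lemma continuous_in_x_dstep:
  assumes h: "continuous_in_x h" and g: "continuous_in_x g"
    and "pinv_ok (mulf h h)" "pinv_ok (mulf h g)"
  shows "continuous_in_x (dstep h g)"
  unfolding continuous_in_x_def dstep_def
proof
  fix t
  have "continuous_on UNIV (\<lambda>x. pinv (mulf h h) x t)" "continuous_on UNIV (\<lambda>x. pinv (mulf h g) x t)"
    using assms by (auto intro!: continuous_at_imp_continuous_on DERIV_isCont pinv_mulf_has_real_derivative)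
  moreover have "1 + pinv (mulf h h) x t \<noteq> 0" for x
    using pinv_square_nonneg[of h x t] by linarith
  ultimately show "continuous_on UNIV (\<lambda>x. g x t - h x t / (1 + pinv (mulf h h) x t) * pinv (mulf h g) x t)"
    using h g unfolding continuous_in_x_def by (auto intro!: continuous_intros)
qed

lemma pinv_quotient_has_real_derivative:
  assumes "continuous_in_x h" "continuous_in_x g1" "continuous_in_x g2"
    and "pinv_ok (mulf h h)" "pinv_ok (mulf h g1)" "pinv_ok (mulf h g2)"
  shows "((\<lambda>y. pinv (mulf h g1) y t * pinv (mulf h g2) y t / (1 + pinv (mulf h h) y t))
           has_real_derivative g1 x t * g2 x t - dstep h g1 x t * dstep h g2 x t) (at x)"
proof -
  define D where "D y = 1 + pinv (mulf h h) y t" for y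
  define A1 where "A1 y = pinv (mulf h g1) y t" for y
  define A2 where "A2 y = pinv (mulf h g2) y t" for y
  have D: "D x \<noteq> 0"
    unfolding D_def using pinv_square_nonneg[of h x t] by linarith
  have "(D has_real_derivative 0 + h x t * h x t) (at x)"
    unfolding D_def by (intro DERIV_add DERIV_const pinv_mulf_has_real_derivative assms)
  moreover have "(A1 has_real_derivative h x t * g1 x t) (at x)"
                "(A2 has_real_derivative h x t * g2 x t) (at x)"
    unfolding A1_def A2_def by (intro pinv_mulf_has_real_derivative assms)+
  ultimately have quotient_rule: "((\<lambda>y. A1 y * A2 y / D y) has_real_derivative
      ((h x t * g1 x t * A2 x + h x t * g2 x t * A1 x) * D x - A1 x * A2 x * (0 + h x t * h x t))
        / (D x * D x)) (at x)"
    using D by (intro DERIV_divide DERIV_mult)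
  have dstep: "dstep h g1 x t = g1 x t - h x t / D x * A1 x"
              "dstep h g2 x t = g2 x t - h x t / D x * A2 x"
    by (simp_all add: dstep_def D_def A1_def A2_def)
  have "((h x t * g1 x t * A2 x + h x t * g2 x t * A1 x) * D x - A1 x * A2 x * (0 + h x t * h x t))
        / (D x * D x) = g1 x t * g2 x t - dstep h g1 x t * dstep h g2 x t"
    unfolding dstep using D by (simp add: field_simps)
  from quotient_rule[unfolded this, unfolded A1_def A2_def D_def] show ?thesis .
qed

lemma pinv_mulf_dstep:
  assumes "continuous_in_x h" "continuous_in_x g1" "continuous_in_x g2"
    and "pinv_ok (mulf h h)" "pinv_ok (mulf h g1)" "pinv_ok (mulf h g2)"
    and "pinv_ok (mulf g1 g2)" "pinv_ok (mulf (dstep h g1) (dstep h g2))"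
  shows "pinv (mulf (dstep h g1) (dstep h g2)) x t
     = pinv (mulf g1 g2) x t - pinv (mulf h g1) x t * pinv (mulf h g2) x t / (1 + pinv (mulf h h) x t)"
proof -
  define \<Phi> where "\<Phi> y = pinv (mulf (dstep h g1) (dstep h g2)) y t - pinv (mulf g1 g2) y t
      + pinv (mulf h g1) y t * pinv (mulf h g2) y t / (1 + pinv (mulf h h) y t)" for y
  have "\<Phi> x = 0"
  proof (rule DERIV_zero_tendsto_at_bot_imp_zero[where \<Phi> = \<Phi>])
    fix y
    have "(\<Phi> has_real_derivative dstep h g1 y t * dstep h g2 y t - g1 y t * g2 y t
        + (g1 y t * g2 y t - dstep h g1 y t * dstep h g2 y t)) (at y)"
      unfolding \<Phi>_def
      by (intro DERIV_add DERIV_diff pinv_quotient_has_real_derivative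
            pinv_mulf_has_real_derivative continuous_in_x_dstep assms)
    then show "(\<Phi> has_real_derivative 0) (at y)"
      by simp
  next
    have "(\<Phi> \<longlongrightarrow> 0 - 0 + 0 * 0 / (1 + 0)) at_bot"
      unfolding \<Phi>_def by (intro tendsto_intros tendsto_pinv_at_bot assms) simp
    then show "(\<Phi> \<longlongrightarrow> 0) at_bot"
      by simp
  qed
  then show ?thesis
    unfolding \<Phi>_def by simp
qed

locale darboux_iterates =
  fixes f :: "nat \<Rightarrow> fn2" and m :: nat and B :: "fn2 set"
  assumes seeds_in_base: "f ` {1..m} \<subseteq> B"
    and continuous_in_x_base: "a \<in> B \<Longrightarrow> continuous_in_x a"
    and pinv_ok_iter: "l \<le> m \<Longrightarrow> a \<in> B \<Longrightarrow> b \<in> B \<Longrightarrow> pinv_ok (mulf (iter f l a) (iter f l b))"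
begin

lemma continuous_in_x_iter: "l \<le> m \<Longrightarrow> a \<in> B \<Longrightarrow> continuous_in_x (iter f l a)"
proof (induction l arbitrary: a)
  case 0
  then show ?case by (simp add: continuous_in_x_base)
next
  case (Suc l)
  moreover have "f (Suc l) \<in> B"
    using seeds_in_base Suc.prems(1) by auto
  ultimately show ?case
    by (auto intro!: continuous_in_x_dstep pinv_ok_iter)
qed

lemma pinv_mulf_dstep_iter:
  assumes "l < m" "a \<in> B" "b \<in> B"
  defines "h \<equiv> iter f l (f (Suc l))"
  shows "pinv (mulf (dstep h (iter f l a)) (dstep h (iter f l b))) x t
     = pinv (mulf (iter f l a) (iter f l b)) x t
       - pinv (mulf h (iter f l a)) x t * pinv (mulf h (iter f l b)) x t / (1 + pinv (mulf h h) x t)"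
proof -
  have "f (Suc l) \<in> B"
    using seeds_in_base \<open>l < m\<close> by auto
  moreover have "pinv_ok (mulf (dstep h (iter f l a)) (dstep h (iter f l b)))"
    using pinv_ok_iter[of "Suc l" a b] assms by simp
  ultimately show ?thesis
    using assms by (auto intro!: pinv_mulf_dstep continuous_in_x_iter pinv_ok_iter)
qed

end

lemma darboux_iterates_insert:
  assumes "m \<noteq> 0" and "\<forall>j\<in>{1..m}. continuous_in_x (f j)" and "continuous_in_x psi"
    and conv: "\<forall>l\<le>m. \<forall>i\<in>{1..m}. pinv_ok (mulf (iter f l psi) (iter f l psi))
                   \<and> pinv_ok (mulf (iter f l (f i)) (iter f l psi))
                   \<and> (\<forall>j\<in>{1..m}. pinv_ok (mulf (iter f l (f i)) (iter f l (f j))))"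
  shows "darboux_iterates f m (insert psi (f ` {1..m}))"
proof
  fix l a b
  assume "l \<le> m" and ab: "a \<in> insert psi (f ` {1..m})" "b \<in> insert psi (f ` {1..m})"
  note conv_l = conv[rule_format, OF \<open>l \<le> m\<close>]
  then have "pinv_ok (mulf (iter f l psi) (iter f l (f i)))" if "i \<in> {1..m}" for i
    using that by (simp add: mulf_commute)
  moreover have "1 \<in> {1..m}"
    using \<open>m \<noteq> 0\<close> by simp
  ultimately show "pinv_ok (mulf (iter f l a) (iter f l b))"
    using conv_l ab by blast
qed (use assms in auto)

definition schur_complement_00 :: "'a::field mat \<Rightarrow> 'a mat" where
  "schur_complement_00 M = mat (dim_row M - 1) (dim_col M - 1)
     (\<lambda>(i,j). M $$ (Suc i, Suc j) - M $$ (Suc i, 0) * M $$ (0, Suc j) / M $$ (0,0))"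

lemma det_schur_complement_00:
  fixes M :: "'a::field mat"
  assumes M: "M \<in> carrier_mat (Suc K) (Suc K)" and nz: "M $$ (0,0) \<noteq> 0"
  shows "det M = M $$ (0,0) * det (schur_complement_00 M)"
proof -
  define c where "c = M $$ (0,0)"
  \<comment> \<open>\<open>M = N * C\<close> with \<open>C\<close> unit upper triangular and first row of \<open>N\<close> equal to \<open>(c, 0, \<dots>, 0)\<close>.\<close>
  define N where "N = mat (Suc K) (Suc K) (\<lambda>(i,j). if j = 0 then M $$ (i,0)
                   else if i = 0 then 0 else M $$ (i,j) - M $$ (i,0) * M $$ (0,j) / c)"
  define C where "C = mat (Suc K) (Suc K) (\<lambda>(i,j). (if i = j then 1 else 0)
                   + (if i = 0 \<and> j \<noteq> 0 then M $$ (0,j) / c else 0))"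
  have N: "N \<in> carrier_mat (Suc K) (Suc K)" and C: "C \<in> carrier_mat (Suc K) (Suc K)"
    by (auto simp: N_def C_def)
  have "M = N * C"
  proof (rule eq_matI)
    fix i j assume "i < dim_row (N * C)" "j < dim_col (N * C)"
    then have i: "i < Suc K" and j: "j < Suc K" by (auto simp: N_def C_def)
    have "(N * C) $$ (i,j) = (\<Sum>k<Suc K. N $$ (i,k) * C $$ (k,j))"
      using i j N C by (simp add: scalar_prod_def atLeast0LessThan)
    also have "\<dots> = (\<Sum>k<Suc K. N $$ (i,k) * (if k = j then 1 else 0))
        + (\<Sum>k<Suc K. N $$ (i,k) * (if k = 0 \<and> j \<noteq> 0 then M $$ (0,j) / c else 0))"
      using j by (simp add: C_def distrib_left sum.distrib)
    also have "\<dots> = N $$ (i,j) + (if j \<noteq> 0 then N $$ (i,0) * M $$ (0,j) / c else 0)"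
      using j by (simp add: if_distrib[where f="\<lambda>x. _ * x"] cong: if_cong)
    also have "\<dots> = M $$ (i,j)"
      using i j nz by (auto simp: N_def c_def)
    finally show "M $$ (i,j) = (N * C) $$ (i,j)" by simp
  qed (use M N C in auto)
  moreover have "det C = 1"
  proof -
    have "upper_triangular C"
      by (auto simp: upper_triangular_def C_def)
    then have "det C = prod_list (diag_mat C)"
      using det_upper_triangular C by blast
    also have "diag_mat C = map (\<lambda>i. 1) [0..<Suc K]"
      unfolding diag_mat_def by (rule map_cong) (auto simp: C_def)
    finally show ?thesis
      by (simp add: prod_list_replicate map_replicate_const)
  qed
  moreover have "det N = c * det (schur_complement_00 M)"
  proof -
    have "det N = (\<Sum>j<Suc K. N $$ (0,j) * cofactor N 0 j)"
      by (rule laplace_expansion_row[OF N]) simp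
    also have "\<dots> = c * det (mat_delete N 0 0)"
      by (simp add: sum.lessThan_Suc_shift N_def cofactor_def c_def del: sum.lessThan_Suc)
    also have "mat_delete N 0 0 = schur_complement_00 M"
      using M by (intro eq_matI) (auto simp: mat_delete_def N_def schur_complement_00_def c_def)
    finally show ?thesis .
  qed
  ultimately show ?thesis
    using det_mult[OF N C] by (simp add: c_def)
qed

lemma W1_map_dstep:
  assumes gram: "\<And>a b. a \<in> set G \<Longrightarrow> b \<in> set G \<Longrightarrow> pinv (mulf (dstep h a) (dstep h b)) x t
       = pinv (mulf a b) x t - pinv (mulf h a) x t * pinv (mulf h b) x t / (1 + pinv (mulf h h) x t)"
  shows "W1 (map (dstep h) G) x t = W1 (h # G) x t / (1 + pinv (mulf h h) x t)"
proof -
  have D: "1 + pinv (mulf h h) x t \<noteq> 0"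
    using pinv_square_nonneg[of h x t] by linarith
  define M where "M = mat (Suc (length G)) (Suc (length G))
    (\<lambda>(i,j). (if i = j then 1 else 0) + pinv (mulf ((h # G) ! i) ((h # G) ! j)) x t)"
  have "W1 (map (dstep h) G) x t = det (schur_complement_00 M)"
    unfolding W1_def
  proof (intro arg_cong[where f = det] eq_matI)
    fix i j assume "i < dim_row (schur_complement_00 M)" "j < dim_col (schur_complement_00 M)"
    then have "i < length G" "j < length G"
      by (auto simp: schur_complement_00_def M_def)
    with gram[OF nth_mem nth_mem, of i j] show "mat (length (map (dstep h) G)) (length (map (dstep h) G))
        (\<lambda>(i,j). (if i = j then 1 else 0) + pinv (mulf (map (dstep h) G ! i) (map (dstep h) G ! j)) x t) $$ (i,j)
      = schur_complement_00 M $$ (i,j)"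
      by (simp add: schur_complement_00_def M_def mulf_commute[of "G ! i" h])
  qed (auto simp: schur_complement_00_def M_def)
  also have "\<dots> = W1 (h # G) x t / (1 + pinv (mulf h h) x t)"
    using det_schur_complement_00[of M "length G"] D by (simp add: W1_def M_def)
  finally show ?thesis .
qed

lemma W2_map_dstep:
  assumes "L \<noteq> []"
    and gram: "\<And>a b. a \<in> set L \<Longrightarrow> b \<in> set L \<Longrightarrow> pinv (mulf (dstep h a) (dstep h b)) x t
       = pinv (mulf a b) x t - pinv (mulf h a) x t * pinv (mulf h b) x t / (1 + pinv (mulf h h) x t)"
  shows "W2 (map (dstep h) L) x t = W2 (h # L) x t / (1 + pinv (mulf h h) x t)"
proof -
  have D: "1 + pinv (mulf h h) x t \<noteq> 0"
    using pinv_square_nonneg[of h x t] by linarith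
  define K where "K = length L"
  have "K \<noteq> 0"
    using \<open>L \<noteq> []\<close> by (simp add: K_def)
  define M where "M = mat (Suc K) (Suc K) (\<lambda>(i,j). if i + 1 < Suc K
    then (if i = j then 1 else 0) + pinv (mulf ((h # L) ! i) ((h # L) ! j)) x t
    else ((h # L) ! j) x t)"
  have M00: "M $$ (0,0) = 1 + pinv (mulf h h) x t"
    using \<open>K \<noteq> 0\<close> by (simp add: M_def)
  have "W2 (map (dstep h) L) x t = det (schur_complement_00 M)"
    unfolding W2_def
  proof (intro arg_cong[where f = det] eq_matI)
    fix i j assume "i < dim_row (schur_complement_00 M)" "j < dim_col (schur_complement_00 M)"
    then have "i < K" "j < K"
      by (auto simp: schur_complement_00_def M_def)
    then show "mat (length (map (dstep h) L)) (length (map (dstep h) L)) (\<lambda>(i,j). if i + 1 < length (map (dstep h) L)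
        then (if i = j then 1 else 0) + pinv (mulf (map (dstep h) L ! i) (map (dstep h) L ! j)) x t
        else (map (dstep h) L ! j) x t) $$ (i,j)
      = schur_complement_00 M $$ (i,j)"
      using gram[OF nth_mem nth_mem, of i j] \<open>K \<noteq> 0\<close> unfolding M00
      by (auto simp: schur_complement_00_def M_def K_def dstep_def mulf_commute[of "L ! i" h])
  qed (auto simp: schur_complement_00_def M_def K_def)
  also have "\<dots> = W2 (h # L) x t / (1 + pinv (mulf h h) x t)"
    using det_schur_complement_00[of M K] D M00 by (simp add: W2_def M_def K_def)
  finally show ?thesis .
qed

theorem lemma5p1:
  fixes n N m :: nat and alpha eta lam :: real and lams :: "nat \<Rightarrow> real"
    and u psi :: fn2 and phi f :: "nat \<Rightarrow> fn2"
  assumes distinct: "inj_on lams {1..N+m}"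
    and eta: "eta = - (1/2) * alpha"
    and kdv: "kdv_sources n N alpha lams u phi"
    and laxf: "\<forall>j\<in>{1..m}. lax_pair n N u phi alpha eta (lams (N+j)) (f j)"
    and laxpsi: "lax_pair n N u phi alpha eta lam psi"
    and smooth: "smooth2 u" "\<forall>j\<in>{1..N}. smooth2 (phi j)" "\<forall>j\<in>{1..m}. smooth2 (f j)" "smooth2 psi"
    and decay: "decays u" "\<forall>j\<in>{1..N}. decays (phi j)" "\<forall>j\<in>{1..m}. decays (f j)" "decays psi"
    and conv_b: "\<forall>k\<le>n+1. pinv_ok (mulf (Dx u) (bk u k))"
    and conv_Q: "\<forall>i\<in>{1..N}. pinv_ok (mulf (phi i) psi) \<and> (\<forall>j\<in>{1..m}. pinv_ok (mulf (phi i) (f j)))"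
    and conv_it: "\<forall>l\<le>m. \<forall>i\<in>{1..m}. pinv_ok (mulf (iter f l psi) (iter f l psi))
                   \<and> pinv_ok (mulf (iter f l (f i)) (iter f l psi))
                   \<and> (\<forall>j\<in>{1..m}. pinv_ok (mulf (iter f l (f i)) (iter f l (f j))))"
  shows "\<forall>l k. 1 \<le> l \<and> l \<le> m - 1 \<and> 1 \<le> k \<and> k \<le> m - l \<longrightarrow>
     (\<forall>x t.
       W1 (map (\<lambda>j. iter f l (f j)) [l+1..<l+k+1]) x t
         = W1 (map (\<lambda>j. iter f (l-1) (f j)) [l..<l+k+1]) x t
           / (1 + pinv (mulf (iter f (l-1) (f l)) (iter f (l-1) (f l))) x t)
     \<and> W2 (map (\<lambda>j. iter f l (f j)) [l+1..<l+k+1] @ [iter f l psi]) x t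
         = W2 (map (\<lambda>j. iter f (l-1) (f j)) [l..<l+k+1] @ [iter f (l-1) psi]) x t
           / (1 + pinv (mulf (iter f (l-1) (f l)) (iter f (l-1) (f l))) x t))"
proof (intro allI impI conjI)
  fix l k x t
  assume "1 \<le> l \<and> l \<le> m - 1 \<and> 1 \<le> k \<and> k \<le> m - l"
  then obtain l0 where l: "l = Suc l0" and "l + k \<le> m"
    by (cases l) auto
  define B where "B = insert psi (f ` {1..m})"
  interpret darboux_iterates f m B
    unfolding B_def using l \<open>l + k \<le> m\<close> smooth(3,4)
    by (intro darboux_iterates_insert conv_it) (auto intro: smooth2_imp_continuous_in_x)
  define h where "h = iter f l0 (f l)"
  define G where "G = map (\<lambda>j. iter f l0 (f j)) [l+1..<l+k+1]"
  have lists: "map (\<lambda>j. iter f l (f j)) [l+1..<l+k+1] = map (dstep h) G"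
    "map (\<lambda>j. iter f (l-1) (f j)) [l..<l+k+1] = h # G"
    "iter f l psi = dstep h (iter f (l-1) psi)" "iter f (l-1) (f l) = h"
    using upt_conv_Cons[of l "l+k+1"] by (simp_all add: G_def h_def l del: upt_Suc)
  have G: "set G \<subseteq> iter f l0 ` B" and psi: "iter f l0 psi \<in> iter f l0 ` B"
    using \<open>l + k \<le> m\<close> by (auto simp: G_def B_def)
  have gram: "pinv (mulf (dstep h a) (dstep h b)) x t
      = pinv (mulf a b) x t - pinv (mulf h a) x t * pinv (mulf h b) x t / (1 + pinv (mulf h h) x t)"
    if "a \<in> iter f l0 ` B" "b \<in> iter f l0 ` B" for a b
    using that \<open>l + k \<le> m\<close> by (auto simp: h_def l intro!: pinv_mulf_dstep_iter)
  show "W1 (map (\<lambda>j. iter f l (f j)) [l+1..<l+k+1]) x t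
      = W1 (map (\<lambda>j. iter f (l-1) (f j)) [l..<l+k+1]) x t
        / (1 + pinv (mulf (iter f (l-1) (f l)) (iter f (l-1) (f l))) x t)"
    unfolding lists using G by (intro W1_map_dstep gram) auto
  have "W2 (map (dstep h) (G @ [iter f l0 psi])) x t
      = W2 (h # G @ [iter f l0 psi]) x t / (1 + pinv (mulf h h) x t)"
    using G psi by (intro W2_map_dstep gram) auto
  then show "W2 (map (\<lambda>j. iter f l (f j)) [l+1..<l+k+1] @ [iter f l psi]) x t
      = W2 (map (\<lambda>j. iter f (l-1) (f j)) [l..<l+k+1] @ [iter f (l-1) psi]) x t
        / (1 + pinv (mulf (iter f (l-1) (f l)) (iter f (l-1) (f l))) x t)"
    unfolding lists by (simp add: l)
qed

end
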